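(* Let $d\ge1$, $\sigma>0$, $\bar\gamma>0$, $\gamma\in(0,\bar\gamma]$, and let $T_\gamma,\tilde T_\gamma:\mathbb{R}^d\to\mathbb{R}^d$ be measurable. Assume there is a non-decreasing $\tau_\gamma:[0,\infty)\to[0,\infty)$ with $\|T_\gamma(x)-T_\gamma(\tilde x)\|\le\tau_\gamma(\|x-\tilde x\|)$ for all $x,\tilde x\in\mathbb{R}^d$, and that there is $c_\infty>0$ with $\sup_x\|T_\gamma(x)-\tilde T_\gamma(x)\|\le\gamma c_\infty$. Let $(Z_k)_{k\ge1}$ be i.i.d. standard Gaussian on $\mathbb{R}^d$, $(U_k)_{k\ge1}$ i.i.d. uniform on $[0,1]$, independent of each other and of an initial pair $(X_0,\tilde X_0)$, and define for $k\in\mathbb{N}$ $$X_{k+1}=T_\gamma(X_k)+(\sigma^2\gamma)^{1/2}Z_{k+1},\qquad \tilde X_{k+1}=B_{k+1}X_{k+1}+(1-B_{k+1})F_\gamma(X_k,\tilde X_k,Z_{k+1}),$$ where $B_{k+1}=\mathbb{1}_{[0,\infty)}(p_\gamma(X_k,\tilde X_k,Z_{k+1})-U_{k+1})$, and, with $E(x,\tilde x)=\tilde T_\gamma(\tilde x)-T_\gamma(x)$, $e(x,\tilde x)=E(x,\tilde x)/\|E(x,\tilde x)\|$ if $E(x,\tilde x)\neq0$ and $e(x,\tilde x)=e_0$ (a fixed unit vector) otherwise, $$F_\gamma(x,\tilde x,z)=\tilde T_\gamma(\tilde x)+(\sigma^2\gamma)^{1/2}\{\mathrm{Id}-2e(x,\tilde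 x)e(x,\tilde x)^\top\}z,\quad p_\gamma(x,\tilde x,z)=1\wedge\frac{\varphi_{\sigma^2\gamma}\{\|E(x,\tilde x)\|-(\sigma^2\gamma)^{1/2}\langle e(x,\tilde x),z\rangle\}}{\varphi_{\sigma^2\gamma}\{(\sigma^2\gamma)^{1/2}\langle e(x,\tilde x),z\rangle\}}.$$ Let $G_k=\langle e(X_{k-1},\tilde X_{k-1}),Z_k\rangle$, and for $a\ge0$, $g\in\mathbb{R}$, $u\in[0,1]$ set $\bar p_{\sigma^2\gamma}(a,g)=1\wedge\frac{\varphi_{\sigma^2\gamma}(a-(\sigma^2\gamma)^{1/2}g)}{\varphi_{\sigma^2\gamma}((\sigma^2\gamma)^{1/2}g)}$, $\mathcal H_\gamma(a,g,u)=\mathbb{1}_{[0,\infty)}(u-\bar p_{\sigma^2\gamma}(a,g))(a-2(\sigma^2\gamma)^{1/2}g)$ and $\mathcal G_\gamma(w,g,u)=\mathcal H_\gamma(\tau_\gamma(w)+\gamma c_\infty,g,u)$ for $w\ge0$. Then for every $k\in\mathbb{N}$, almost surely, $$\|X_{k+1}-\tilde X_{k+1}\|\le\mathcal G_\gamma(\|X_k-\tilde X_k\|,G_{k+1},U_{k+1}).$$ Moreover, for any $g\in\mathbb{R}$ and $u\in[0,1]$, $w\mapsto\mathcal G_\gamma(w,g,u)$ is non-decreasing on $[0,\infty)$.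
   Context: $\varphi_{s}(t)=(2\pi s)^{-1/2}e^{-t^2/(2s)}$ denotes the centered one-dimensional Gaussian density with variance $s>0$. *)

theory Defs
  imports "HOL-Probability.Probability"
begin

definition gauss_dens :: "real \<Rightarrow> real \<Rightarrow> real" where
  "gauss_dens s t = (2 * pi * s) powr (-1/2) * exp (- (t^2) / (2 * s))"

definition std_gauss_vec :: "'a::euclidean_space \<Rightarrow> real" where
  "std_gauss_vec x = (\<Prod>b\<in>Basis. std_normal_density (x \<bullet> b))"

definition gen_events :: "'w measure \<Rightarrow> ('w \<Rightarrow> 'b) \<Rightarrow> 'b measure \<Rightarrow> 'w set set" where
  "gen_events M X N = {X -` A \<inter> space M | A. A \<in> sets N}"

definition Edif :: "('a::euclidean_space \<Rightarrow> 'a) \<Rightarrow> ('a \<Rightarrow> 'a) \<Rightarrow> 'a \<Rightarrow> 'a \<Rightarrow> 'a" where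
  "Edif T Tt x xt = Tt xt - T x"

definition edir :: "('a::euclidean_space \<Rightarrow> 'a) \<Rightarrow> ('a \<Rightarrow> 'a) \<Rightarrow> 'a \<Rightarrow> 'a \<Rightarrow> 'a \<Rightarrow> 'a" where
  "edir T Tt e0 x xt = (if Edif T Tt x xt \<noteq> 0
      then (1 / norm (Edif T Tt x xt)) *\<^sub>R Edif T Tt x xt else e0)"

definition Fref :: "('a::euclidean_space \<Rightarrow> 'a) \<Rightarrow> ('a \<Rightarrow> 'a) \<Rightarrow> 'a \<Rightarrow> real \<Rightarrow> real
    \<Rightarrow> 'a \<Rightarrow> 'a \<Rightarrow> 'a \<Rightarrow> 'a" where
  "Fref T Tt e0 \<sigma> \<gamma> x xt z =
     (let e = edir T Tt e0 x xt
      in Tt xt + sqrt (\<sigma>^2 * \<gamma>) *\<^sub>R (z - (2 * (e \<bullet> z)) *\<^sub>R e))"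

definition pacc :: "('a::euclidean_space \<Rightarrow> 'a) \<Rightarrow> ('a \<Rightarrow> 'a) \<Rightarrow> 'a \<Rightarrow> real \<Rightarrow> real
    \<Rightarrow> 'a \<Rightarrow> 'a \<Rightarrow> 'a \<Rightarrow> real" where
  "pacc T Tt e0 \<sigma> \<gamma> x xt z =
     (let e = edir T Tt e0 x xt; v = \<sigma>^2 * \<gamma>
      in min 1 (gauss_dens v (norm (Edif T Tt x xt) - sqrt v * (e \<bullet> z))
                / gauss_dens v (sqrt v * (e \<bullet> z))))"

definition coupled_step :: "('a::euclidean_space \<Rightarrow> 'a) \<Rightarrow> ('a \<Rightarrow> 'a) \<Rightarrow> 'a \<Rightarrow> real \<Rightarrow> real
    \<Rightarrow> 'a \<times> 'a \<Rightarrow> 'a \<Rightarrow> real \<Rightarrow> 'a \<times> 'a" where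
  "coupled_step T Tt e0 \<sigma> \<gamma> p z u =
     (let x = fst p; xt = snd p;
          x' = T x + sqrt (\<sigma>^2 * \<gamma>) *\<^sub>R z;
          B = indicator {0..} (pacc T Tt e0 \<sigma> \<gamma> x xt z - u) :: real
      in (x', B *\<^sub>R x' + (1 - B) *\<^sub>R Fref T Tt e0 \<sigma> \<gamma> x xt z))"

primrec coupled_chain :: "('a::euclidean_space \<Rightarrow> 'a) \<Rightarrow> ('a \<Rightarrow> 'a) \<Rightarrow> 'a \<Rightarrow> real \<Rightarrow> real
    \<Rightarrow> ('w \<Rightarrow> 'a) \<Rightarrow> ('w \<Rightarrow> 'a) \<Rightarrow> (nat \<Rightarrow> 'w \<Rightarrow> 'a) \<Rightarrow> (nat \<Rightarrow> 'w \<Rightarrow> real)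
    \<Rightarrow> nat \<Rightarrow> 'w \<Rightarrow> 'a \<times> 'a" where
  "coupled_chain T Tt e0 \<sigma> \<gamma> X0 Xt0 Z U 0 w = (X0 w, Xt0 w)"
| "coupled_chain T Tt e0 \<sigma> \<gamma> X0 Xt0 Z U (Suc k) w =
     coupled_step T Tt e0 \<sigma> \<gamma> (coupled_chain T Tt e0 \<sigma> \<gamma> X0 Xt0 Z U k w) (Z (Suc k) w) (U (Suc k) w)"

definition pbar :: "real \<Rightarrow> real \<Rightarrow> real \<Rightarrow> real" where
  "pbar v a g = min 1 (gauss_dens v (a - sqrt v * g) / gauss_dens v (sqrt v * g))"

definition Hfun :: "real \<Rightarrow> real \<Rightarrow> real \<Rightarrow> real \<Rightarrow> real \<Rightarrow> real" where
  "Hfun \<sigma> \<gamma> a g u = indicator {0..} (u - pbar (\<sigma>^2 * \<gamma>) a g) * (a - 2 * sqrt (\<sigma>^2 * \<gamma>) * g)"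

definition Gfun :: "(real \<Rightarrow> real) \<Rightarrow> real \<Rightarrow> real \<Rightarrow> real \<Rightarrow> real \<Rightarrow> real \<Rightarrow> real \<Rightarrow> real" where
  "Gfun \<tau> cinf \<sigma> \<gamma> w g u = Hfun \<sigma> \<gamma> (\<tau> w + \<gamma> * cinf) g u"

end

theory Submission imports Defs begin

text \<open>Write \<open>v = \<sigma>\<^sup>2\<gamma>\<close>, \<open>a\<^sub>0 = \<parallel>E(x, x\<^sub>t)\<parallel>\<close> and \<open>g = \<langle>e, z\<rangle>\<close>. One step of the coupling either
  accepts, so that both chains coincide, or reflects, and then \<open>X' - F\<close> is the multiple
  \<open>(2\<surd>v g - a\<^sub>0) e\<close> of the unit vector \<open>e\<close>; hence the new distance is \<open>|a\<^sub>0 - 2\<surd>v g|\<close> on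
  rejection and \<open>0\<close> on acceptance. Since \<open>p\<^sub>v(a, g) = min 1 (exp(-a(a - 2\<surd>v g)/(2v)))\<close>, a
  rejection forces \<open>a\<^sub>0 > 2\<surd>v g\<close>, so this distance is bounded by \<open>H(a\<^sub>0, g, u)\<close> whenever
  \<open>u < 1\<close>, which holds almost surely. The same formula shows that \<open>p\<^sub>v(\<cdot>, g)\<close> decreases once
  \<open>a > 2\<surd>v g\<close>, which makes \<open>H(\<cdot>, g, u)\<close> non-decreasing; together with
  \<open>a\<^sub>0 \<le> \<tau>(\<parallel>x - x\<^sub>t\<parallel>) + \<gamma> c\<^sub>\<infinity>\<close> this yields both claims.\<close>

lemma pbar_eq_exp:
  assumes "v > 0"
  shows "pbar v a g = min 1 (exp (- (a * (a - 2 * sqrt v * g)) / (2 * v)))"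
proof -
  have "gauss_dens v (a - sqrt v * g) / gauss_dens v (sqrt v * g)
      = exp (- ((a - sqrt v * g)\<^sup>2) / (2 * v)) / exp (- ((sqrt v * g)\<^sup>2) / (2 * v))"
    using assms by (simp add: gauss_dens_def)
  also have "\<dots> = exp (- (a * (a - 2 * sqrt v * g)) / (2 * v))"
    using assms by (simp add: exp_diff[symmetric] field_simps power2_eq_square)
  finally show ?thesis by (simp add: pbar_def)
qed

lemma pbar_le_one: "pbar v a g \<le> 1"
  by (simp add: pbar_def)

lemma pbar_less_oneD:
  assumes "v > 0" "0 \<le> a" "pbar v a g < 1"
  shows "2 * sqrt v * g < a"
proof -
  have "exp (- (a * (a - 2 * sqrt v * g)) / (2 * v)) < 1"
    using assms(3) unfolding pbar_eq_exp[OF assms(1)] by (simp add: min_def split: if_splits)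
  hence "0 < a * (a - 2 * sqrt v * g) / (2 * v)"
    by simp
  hence "a * (a - 2 * sqrt v * g) > 0"
    using assms(1) by (simp add: zero_less_divide_iff)
  thus ?thesis
    using assms(2) by (auto simp: zero_less_mult_iff)
qed

lemma pbar_antimono:
  assumes "v > 0" "0 \<le> a\<^sub>1" "a\<^sub>1 \<le> a\<^sub>2" "2 * sqrt v * g \<le> a\<^sub>1"
  shows "pbar v a\<^sub>2 g \<le> pbar v a\<^sub>1 g"
proof -
  have "a\<^sub>1 * (a\<^sub>1 - 2 * sqrt v * g) \<le> a\<^sub>2 * (a\<^sub>2 - 2 * sqrt v * g)"
    using assms by (intro mult_mono) auto
  thus ?thesis
    using assms(1) by (simp add: pbar_eq_exp divide_right_mono min.coboundedI2)
qed

lemma Hfun_nonneg: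
  assumes "\<sigma>\<^sup>2 * \<gamma> > 0" "u < 1" "0 \<le> a"
  shows "0 \<le> Hfun \<sigma> \<gamma> a g u"
proof (cases "pbar (\<sigma>\<^sup>2 * \<gamma>) a g \<le> u")
  case True
  with assms(2) have "pbar (\<sigma>\<^sup>2 * \<gamma>) a g < 1" by linarith
  hence "2 * sqrt (\<sigma>\<^sup>2 * \<gamma>) * g < a"
    by (rule pbar_less_oneD[OF assms(1,3)])
  with True show ?thesis by (simp add: Hfun_def)
qed (simp add: Hfun_def)

lemma Hfun_mono:
  assumes "\<sigma>\<^sup>2 * \<gamma> > 0" "u \<le> 1"
  shows "mono_on {0..} (\<lambda>a. Hfun \<sigma> \<gamma> a g u)"
proof (rule mono_onI)
  fix a\<^sub>1 a\<^sub>2 :: real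
  assume a: "a\<^sub>1 \<in> {0..}" "a\<^sub>2 \<in> {0..}" "a\<^sub>1 \<le> a\<^sub>2"
  define v where "v = \<sigma>\<^sup>2 * \<gamma>"
  have v: "v > 0" using assms(1) by (simp add: v_def)
  consider "u = 1" | "u < 1" "u < pbar v a\<^sub>1 g" | "u < 1" "pbar v a\<^sub>1 g \<le> u"
    using assms(2) by linarith
  thus "Hfun \<sigma> \<gamma> a\<^sub>1 g u \<le> Hfun \<sigma> \<gamma> a\<^sub>2 g u"
  proof cases
    case 1
    thus ?thesis using a pbar_le_one[of v] by (simp add: Hfun_def v_def)
  next
    case 2
    thus ?thesis using Hfun_nonneg[OF assms(1), of u a\<^sub>2 g] a by (simp add: Hfun_def v_def)
  next
    case 3
    hence "pbar v a\<^sub>1 g < 1" by linarith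
    hence "2 * sqrt v * g < a\<^sub>1" using a(1) by (intro pbar_less_oneD[OF v]) auto
    hence "pbar v a\<^sub>2 g \<le> pbar v a\<^sub>1 g" using a v by (intro pbar_antimono) auto
    with 3 a show ?thesis by (simp add: Hfun_def v_def)
  qed
qed

lemma Gfun_mono:
  assumes "\<sigma>\<^sup>2 * \<gamma> > 0" "u \<le> 1" "0 \<le> \<gamma> * cinf"
    and "\<And>t. t \<ge> 0 \<Longrightarrow> \<tau> t \<ge> 0" "mono_on {0..} \<tau>"
  shows "mono_on {0..} (\<lambda>w. Gfun \<tau> cinf \<sigma> \<gamma> w g u)"
proof (rule mono_onI)
  fix r s :: real
  assume rs: "r \<in> {0..}" "s \<in> {0..}" "r \<le> s"
  have "\<tau> r + \<gamma> * cinf \<le> \<tau> s + \<gamma> * cinf"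
    using mono_onD[OF assms(5) rs] by simp
  moreover have "0 \<le> \<tau> r + \<gamma> * cinf"
    using assms(3,4) rs by (simp add: add_nonneg_nonneg)
  ultimately show "Gfun \<tau> cinf \<sigma> \<gamma> r g u \<le> Gfun \<tau> cinf \<sigma> \<gamma> s g u"
    unfolding Gfun_def using mono_onD[OF Hfun_mono[OF assms(1,2)]] by auto
qed

lemma norm_edir:
  assumes "norm e0 = 1"
  shows "norm (edir T Tt e0 x xt) = 1"
  using assms by (simp add: edir_def)

lemma Edif_eq_scaleR_edir: "Edif T Tt x xt = norm (Edif T Tt x xt) *\<^sub>R edir T Tt e0 x xt"
  by (simp add: edir_def)

lemma norm_Edif_le:
  assumes "\<And>x y. norm (T x - T y) \<le> \<tau> (norm (x - y))"
    and "\<And>x. norm (T x - Tt x) \<le> c"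
  shows "norm (Edif T Tt x xt) \<le> \<tau> (norm (x - xt)) + c"
proof -
  have "norm (Edif T Tt x xt) \<le> norm (T xt - T x) + norm (T xt - Tt xt)"
    using norm_triangle_ineq4[of "T xt - T x" "T xt - Tt xt"] by (simp add: Edif_def)
  thus ?thesis
    using assms(1)[of xt x] assms(2)[of xt] by (simp add: norm_minus_commute)
qed

lemma pacc_eq_pbar:
  "pacc T Tt e0 \<sigma> \<gamma> x xt z
     = pbar (\<sigma>\<^sup>2 * \<gamma>) (norm (Edif T Tt x xt)) (edir T Tt e0 x xt \<bullet> z)"
  by (simp add: pacc_def pbar_def Let_def)

lemma coupled_step_eq:
  fixes T Tt :: "'a::euclidean_space \<Rightarrow> 'a"
  shows "coupled_step T Tt e0 \<sigma> \<gamma> (x, xt) z u =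
    (T x + sqrt (\<sigma>\<^sup>2 * \<gamma>) *\<^sub>R z,
     if u \<le> pbar (\<sigma>\<^sup>2 * \<gamma>) (norm (Edif T Tt x xt)) (edir T Tt e0 x xt \<bullet> z)
     then T x + sqrt (\<sigma>\<^sup>2 * \<gamma>) *\<^sub>R z else Fref T Tt e0 \<sigma> \<gamma> x xt z)"
  unfolding coupled_step_def Let_def fst_conv snd_conv pacc_eq_pbar
  by (simp add: indicator_def)

lemma norm_coupled_step_diff:
  fixes T Tt :: "'a::euclidean_space \<Rightarrow> 'a" and x xt z e0 :: 'a
    and \<sigma> \<gamma> u :: real
  assumes "norm e0 = 1"
  defines "a\<^sub>0 \<equiv> norm (Edif T Tt x xt)" and "g \<equiv> edir T Tt e0 x xt \<bullet> z"
    and "s \<equiv> coupled_step T Tt e0 \<sigma> \<gamma> (x, xt) z u"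
  shows "norm (fst s - snd s)
     = (if u \<le> pbar (\<sigma>\<^sup>2 * \<gamma>) a\<^sub>0 g then 0 else \<bar>a\<^sub>0 - 2 * sqrt (\<sigma>\<^sup>2 * \<gamma>) * g\<bar>)"
proof -
  define e where "e = edir T Tt e0 x xt"
  define r where "r = sqrt (\<sigma>\<^sup>2 * \<gamma>)"
  have "T x + r *\<^sub>R z - Fref T Tt e0 \<sigma> \<gamma> x xt z = (2 * r * g) *\<^sub>R e - Edif T Tt x xt"
    unfolding Fref_def Edif_def Let_def e_def r_def g_def by (simp add: algebra_simps)
  also have "Edif T Tt x xt = a\<^sub>0 *\<^sub>R e"
    unfolding a\<^sub>0_def e_def by (rule Edif_eq_scaleR_edir)
  finally have "T x + r *\<^sub>R z - Fref T Tt e0 \<sigma> \<gamma> x xt z = (2 * r * g - a\<^sub>0) *\<^sub>R e"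
    by (simp add: scaleR_diff_left)
  hence "norm (T x + r *\<^sub>R z - Fref T Tt e0 \<sigma> \<gamma> x xt z) = \<bar>a\<^sub>0 - 2 * r * g\<bar>"
    using norm_edir[OF assms(1)] by (simp add: e_def)
  thus ?thesis
    unfolding s_def coupled_step_eq r_def a\<^sub>0_def[symmetric] g_def[symmetric] by simp
qed

lemma norm_coupled_step_diff_le_Hfun:
  fixes z :: "'a::euclidean_space"
  assumes "\<sigma>\<^sup>2 * \<gamma> > 0" "u < 1" "norm e0 = 1" "norm (Edif T Tt x xt) \<le> a"
  defines "s \<equiv> coupled_step T Tt e0 \<sigma> \<gamma> (x, xt) z u"
  shows "norm (fst s - snd s) \<le> Hfun \<sigma> \<gamma> a (edir T Tt e0 x xt \<bullet> z) u"
proof -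
  define a\<^sub>0 where "a\<^sub>0 = norm (Edif T Tt x xt)"
  define g where "g = edir T Tt e0 x xt \<bullet> z"
  have "norm (fst s - snd s) \<le> Hfun \<sigma> \<gamma> a\<^sub>0 g u"
  proof (cases "u \<le> pbar (\<sigma>\<^sup>2 * \<gamma>) a\<^sub>0 g")
    case True
    thus ?thesis using Hfun_nonneg[OF assms(1,2)]
      by (simp add: norm_coupled_step_diff[OF assms(3)] s_def a\<^sub>0_def g_def)
  next
    case False
    with assms(2) have "pbar (\<sigma>\<^sup>2 * \<gamma>) a\<^sub>0 g < 1" by linarith
    hence "2 * sqrt (\<sigma>\<^sup>2 * \<gamma>) * g < a\<^sub>0"
      by (rule pbar_less_oneD[OF assms(1) norm_ge_zero[of "Edif T Tt x xt", folded a\<^sub>0_def]])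
    with False show ?thesis
      by (simp add: norm_coupled_step_diff[OF assms(3)] s_def a\<^sub>0_def g_def Hfun_def)
  qed
  also have "\<dots> \<le> Hfun \<sigma> \<gamma> a g u"
    using mono_onD[OF Hfun_mono[OF assms(1)]] assms(2,4) by (simp add: a\<^sub>0_def)
  finally show ?thesis by (simp add: g_def)
qed

lemma AE_uniform_less:
  fixes a b :: real
  assumes "distributed M lborel X (\<lambda>x. ennreal (indicator {a..b} x))"
  shows "AE w in M. X w < b"
proof -
  have X: "X \<in> measurable M lborel"
    and distr: "distr M lborel X = density lborel (\<lambda>x. ennreal (indicator {a..b} x))"
    using assms by (auto simp: distributed_def)
  have "AE x in lborel. 0 < ennreal (indicator {a..b} x) \<longrightarrow> x < b"
    using AE_lborel_singleton[of b] by eventually_elim (auto simp: indicator_def)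
  hence "AE x in distr M lborel X. x < b"
    unfolding distr by (subst AE_density) auto
  thus ?thesis by (subst (asm) AE_distr_iff) (use X in auto)
qed

theorem proposition6:
  fixes M :: "'w measure"
    and T Tt :: "'a::euclidean_space \<Rightarrow> 'a"
    and \<tau> :: "real \<Rightarrow> real"
    and e0 :: 'a
    and \<sigma> \<gamma> \<gamma>bar cinf :: real
    and X0 Xt0 :: "'w \<Rightarrow> 'a"
    and Z :: "nat \<Rightarrow> 'w \<Rightarrow> 'a"
    and U :: "nat \<Rightarrow> 'w \<Rightarrow> real"
  assumes "prob_space M"
    and "\<sigma> > 0" and "\<gamma>bar > 0" and "0 < \<gamma>" and "\<gamma> \<le> \<gamma>bar"
    and "T \<in> borel_measurable borel" and "Tt \<in> borel_measurable borel"
    and "\<And>t. t \<ge> 0 \<Longrightarrow> \<tau> t \<ge> 0"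
    and "mono_on {0..} \<tau>"
    and "\<And>x y. norm (T x - T y) \<le> \<tau> (norm (x - y))"
    and "cinf > 0"
    and "(SUP x. norm (T x - Tt x)) \<le> \<gamma> * cinf"
    and "bdd_above (range (\<lambda>x. norm (T x - Tt x)))"
    and "norm e0 = 1"
    and "X0 \<in> borel_measurable M" and "Xt0 \<in> borel_measurable M"
    and "\<And>k. k \<ge> 1 \<Longrightarrow> distributed M lborel (Z k) (\<lambda>x. ennreal (std_gauss_vec x))"
    and "\<And>k. k \<ge> 1 \<Longrightarrow> distributed M lborel (U k) (\<lambda>x. ennreal (indicator {0..1} x))"
    and "prob_space.indep_sets M
           (case_sum (\<lambda>k. gen_events M (Z k) borel)
              (case_sum (\<lambda>k. gen_events M (U k) borel)
                 (\<lambda>_::unit. gen_events M (\<lambda>w. (X0 w, Xt0 w)) borel)))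
           (Inl ` {1..} \<union> (Inr \<circ> Inl) ` {1..} \<union> {Inr (Inr ())})"
  shows "(\<forall>k. AE w in M.
            (let P = coupled_chain T Tt e0 \<sigma> \<gamma> X0 Xt0 Z U;
                 Gk1 = edir T Tt e0 (fst (P k w)) (snd (P k w)) \<bullet> Z (Suc k) w
             in norm (fst (P (Suc k) w) - snd (P (Suc k) w))
                  \<le> Gfun \<tau> cinf \<sigma> \<gamma> (norm (fst (P k w) - snd (P k w))) Gk1 (U (Suc k) w)))
         \<and> (\<forall>g u. u \<in> {0..1} \<longrightarrow> mono_on {0..} (\<lambda>w. Gfun \<tau> cinf \<sigma> \<gamma> w g u))"
proof -
  have v: "\<sigma>\<^sup>2 * \<gamma> > 0" using assms(2,4) by simp
  have T_Tt_le: "norm (T x - Tt x) \<le> \<gamma> * cinf" for x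
    using cSUP_upper[OF UNIV_I assms(13), of x] assms(12) by linarith
  have Edif_le: "norm (Edif T Tt x xt) \<le> \<tau> (norm (x - xt)) + \<gamma> * cinf" for x xt
    using assms(10) T_Tt_le by (rule norm_Edif_le)
  have U_lt_1: "AE w in M. U (Suc k) w < 1" for k
    by (rule AE_uniform_less, rule assms(18)) simp
  have "AE w in M. (let P = coupled_chain T Tt e0 \<sigma> \<gamma> X0 Xt0 Z U;
                 Gk1 = edir T Tt e0 (fst (P k w)) (snd (P k w)) \<bullet> Z (Suc k) w
             in norm (fst (P (Suc k) w) - snd (P (Suc k) w))
                  \<le> Gfun \<tau> cinf \<sigma> \<gamma> (norm (fst (P k w) - snd (P k w))) Gk1 (U (Suc k) w))" for k
    using U_lt_1[of k]
  proof eventually_elim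
    case (elim w)
    obtain x xt where "coupled_chain T Tt e0 \<sigma> \<gamma> X0 Xt0 Z U k w = (x, xt)" by fastforce
    with norm_coupled_step_diff_le_Hfun[OF v elim assms(14) Edif_le]
    show ?case by (simp add: Gfun_def)
  qed
  moreover have "mono_on {0..} (\<lambda>w. Gfun \<tau> cinf \<sigma> \<gamma> w g u)" if "u \<in> {0..1}" for g u
    using that assms(4,11) by (intro Gfun_mono[OF v _ _ assms(8,9)]) auto
  ultimately show ?thesis by blast
qed

end
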